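(* Let $0<q<1/2$, $p=1-q$, $s=4pq$, and let $I_x(a,b)=\frac{\Gamma(a+b)}{\Gamma(a)\Gamma(b)}\int_0^xt^{a-1}(1-t)^{b-1}\,dt$. For every real $z>1$, $$\sqrt{\frac{z}{z+\frac12}}\cdot\frac{s^z}{\sqrt{\pi z}}\le I_s(z,1/2)\le\frac{1}{\sqrt{1-s}}\cdot\frac{s^z}{\sqrt{\pi z}}.$$
   Context: For integers $z\ge1$, $I_s(z,1/2)$ equals the probability $P(z)=1-\sum_{k=0}^{z-1}(p^zq^k-q^zp^k)\binom{k+z-1}{k}$ of success of a double-spend attack after $z$ confirmations. *)

theory Defs
  imports "HOL-Analysis.Analysis"
begin

definition reg_inc_beta :: "real \<Rightarrow> real \<Rightarrow> real \<Rightarrow> real" where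
  "reg_inc_beta x a b =
     Gamma (a + b) / (Gamma a * Gamma b) *
     integral {0..x} (\<lambda>t. t powr (a - 1) * (1 - t) powr (b - 1))"

end

theory Submission
  imports Defs
begin

text \<open>On \<open>[0, s]\<close> the weight \<open>(1 - t) powr (-1/2)\<close> lies between \<open>1\<close> and \<open>1 / sqrt (1 - s)\<close>,
  so the incomplete beta integral lies between \<open>s powr z / z\<close> and that value divided by
  \<open>sqrt (1 - s)\<close>. The normalising factor \<open>Gamma (z + 1/2) / (Gamma z * sqrt pi)\<close> is controlled by
  log-convexity of \<open>Gamma\<close> on the triples \<open>z, z + 1/2, z + 1\<close> and \<open>z + 1/2, z + 1, z + 3/2\<close>, which
  gives \<open>z / sqrt (z + 1/2) \<le> Gamma (z + 1/2) / Gamma z \<le> sqrt z\<close>.\<close>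

lemma Gamma_plus_half_le:
  fixes y :: real
  assumes "y > 0"
  shows "Gamma (y + 1/2) \<le> sqrt y * Gamma y"
proof -
  have "(ln \<circ> Gamma) ((1 - 1/2) *\<^sub>R y + (1/2) *\<^sub>R (y + 1))
        \<le> (1 - 1/2) * (ln \<circ> Gamma) y + (1/2) * (ln \<circ> Gamma) (y + 1)"
    by (rule convex_onD[OF log_convex_Gamma_real]) (use assms in auto)
  moreover have "(1 - 1/2) *\<^sub>R y + (1/2) *\<^sub>R (y + 1) = y + 1/2"
    by (simp add: field_simps)
  moreover have "Gamma (y + 1) = y * Gamma y"
    using assms by (simp add: Gamma_plus1 nonpos_Ints_def)
  ultimately have "ln (Gamma (y + 1/2)) \<le> ln (Gamma y) / 2 + ln (y * Gamma y) / 2"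
    by simp
  also have "\<dots> = ln (sqrt y * Gamma y)"
    using assms by (simp add: ln_mult ln_sqrt field_simps)
  finally show ?thesis
    using assms by simp
qed

lemma Gamma_plus_half_ratio_bounds:
  fixes y :: real
  assumes "y > 0"
  shows "y / sqrt (y + 1/2) \<le> Gamma (y + 1/2) / Gamma y"
    and "Gamma (y + 1/2) / Gamma y \<le> sqrt y"
proof -
  have "Gamma (y + 1/2 + 1/2) \<le> sqrt (y + 1/2) * Gamma (y + 1/2)"
    using assms by (intro Gamma_plus_half_le) auto
  moreover have "Gamma (y + 1/2 + 1/2) = y * Gamma y"
    using assms by (simp add: add.assoc Gamma_plus1 nonpos_Ints_def)
  ultimately show "y / sqrt (y + 1/2) \<le> Gamma (y + 1/2) / Gamma y"
    using assms by (simp add: field_simps)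
  show "Gamma (y + 1/2) / Gamma y \<le> sqrt y"
    using Gamma_plus_half_le[OF assms] assms by (simp add: field_simps)
qed

lemma incomplete_beta_integrable:
  fixes a b x :: real
  assumes "a > 0" "0 \<le> x" "x < 1"
  shows "(\<lambda>t. t powr (a - 1) * (1 - t) powr (b - 1)) integrable_on {0..x}"
proof -
  have "(\<lambda>t. t powr (a - 1)) integrable_on {0..x}"
    using has_integral_powr_from_0[of "a - 1" x] assms by auto
  then have "(\<lambda>t. t powr (a - 1)) absolutely_integrable_on {0..x}"
    by (rule nonnegative_absolutely_integrable_1) simp
  moreover have "continuous_on {0..x} (\<lambda>t. (1 - t) powr (b - 1))"
    using assms by (intro continuous_intros) auto
  ultimately have "(\<lambda>t. (1 - t) powr (b - 1) * t powr (a - 1)) absolutely_integrable_on {0..x}"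
    by (intro absolutely_integrable_bounded_measurable_product_real
          continuous_imp_measurable_on_sets_lebesgue compact_imp_bounded compact_continuous_image)
       auto
  then show ?thesis
    by (simp add: absolutely_integrable_on_def mult.commute)
qed

lemma incomplete_beta_integral_bounds:
  fixes a b x :: real
  assumes "a > 0" "b \<le> 1" "0 \<le> x" "x < 1"
  defines "J \<equiv> integral {0..x} (\<lambda>t. t powr (a - 1) * (1 - t) powr (b - 1))"
  shows "x powr a / a \<le> J" and "J \<le> (1 - x) powr (b - 1) * (x powr a / a)"
proof -
  have pow: "((\<lambda>t. t powr (a - 1)) has_integral x powr a / a) {0..x}"
    using has_integral_powr_from_0[of "a - 1" x] assms by simp
  have int: "(\<lambda>t. t powr (a - 1) * (1 - t) powr (b - 1)) integrable_on {0..x}"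
    using assms by (intro incomplete_beta_integrable) auto
  have weight_bounds: "1 \<le> (1 - t) powr (b - 1) \<and> (1 - t) powr (b - 1) \<le> (1 - x) powr (b - 1)"
    if "t \<in> {0..x}" for t
    using that assms powr_mono2'[of "b - 1" "1 - t" 1] powr_mono2'[of "b - 1" "1 - x" "1 - t"] by auto
  show "x powr a / a \<le> J"
    unfolding J_def
    using has_integral_le[OF pow integrable_integral[OF int]] weight_bounds
    by (simp add: mult_le_cancel_left1)
  have "J \<le> (1 - x) powr (b - 1) * (x powr a / a)"
    unfolding J_def
  proof (rule has_integral_le[OF integrable_integral[OF int] has_integral_mult_right[OF pow]])
    fix t assume "t \<in> {0..x}"
    then show "t powr (a - 1) * (1 - t) powr (b - 1) \<le> (1 - x) powr (b - 1) * t powr (a - 1)"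
      using weight_bounds by (simp add: mult_left_mono mult.commute)
  qed
  then show "J \<le> (1 - x) powr (b - 1) * (x powr a / a)" .
qed

lemma powr_minus_half_eq:
  fixes u :: real
  assumes "u > 0"
  shows "u powr (1/2 - 1) = 1 / sqrt u"
  using assms by (simp add: powr_minus_divide powr_half_sqrt flip: powr_minus)

lemma reg_inc_beta_half_bounds:
  fixes a x :: real
  assumes "a > 0" "0 \<le> x" "x < 1"
  shows "sqrt (a / (a + 1/2)) * (x powr a / sqrt (pi * a)) \<le> reg_inc_beta x a (1/2)"
    and "reg_inc_beta x a (1/2) \<le> 1 / sqrt (1 - x) * (x powr a / sqrt (pi * a))"
proof -
  define G where "G = Gamma (a + 1/2) / Gamma a / sqrt pi"
  define J where "J = integral {0..x} (\<lambda>t. t powr (a - 1) * (1 - t) powr (1/2 - 1))"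
  have reg: "reg_inc_beta x a (1/2) = G * J"
    unfolding reg_inc_beta_def G_def J_def by (simp add: Gamma_one_half_real)
  have G_lower: "a / sqrt (a + 1/2) / sqrt pi \<le> G"
    unfolding G_def by (intro divide_right_mono Gamma_plus_half_ratio_bounds assms) simp
  have G_upper: "G \<le> sqrt a / sqrt pi"
    unfolding G_def by (intro divide_right_mono Gamma_plus_half_ratio_bounds assms) simp
  have J_lower: "x powr a / a \<le> J"
    unfolding J_def using assms by (intro incomplete_beta_integral_bounds) auto
  have "J \<le> (1 - x) powr (1/2 - 1) * (x powr a / a)"
    unfolding J_def using assms by (intro incomplete_beta_integral_bounds) auto
  also have "(1 - x) powr (1/2 - 1) = 1 / sqrt (1 - x)"
    using assms by (intro powr_minus_half_eq) simp
  finally have J_upper: "J \<le> 1 / sqrt (1 - x) * (x powr a / a)" .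
  have "0 \<le> a / sqrt (a + 1/2) / sqrt pi" "0 \<le> x powr a / a"
    using assms by simp_all
  then have G_nonneg: "0 \<le> G" and J_nonneg: "0 \<le> J"
    using G_lower J_lower by linarith+
  have "sqrt (a / (a + 1/2)) * (x powr a / sqrt (pi * a)) = a / sqrt (a + 1/2) / sqrt pi * (x powr a / a)"
    using assms by (simp add: real_sqrt_divide real_sqrt_mult field_simps)
  also have "\<dots> \<le> G * J"
    using G_lower J_lower G_nonneg assms by (intro mult_mono) auto
  finally show "sqrt (a / (a + 1/2)) * (x powr a / sqrt (pi * a)) \<le> reg_inc_beta x a (1/2)"
    unfolding reg .
  have "G * J \<le> sqrt a / sqrt pi * (1 / sqrt (1 - x) * (x powr a / a))"
    using G_upper J_upper J_nonneg assms by (intro mult_mono) auto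
  also have "\<dots> = 1 / sqrt (1 - x) * (x powr a / sqrt (pi * a))"
    using assms by (simp add: real_sqrt_mult field_simps)
  finally show "reg_inc_beta x a (1/2) \<le> 1 / sqrt (1 - x) * (x powr a / sqrt (pi * a))"
    unfolding reg .
qed

theorem mainTheorem14:
  fixes q p s z :: real
  assumes "0 < q" and "q < 1/2"
    and "p = 1 - q" and "s = 4 * p * q"
    and "z > 1"
  shows "sqrt (z / (z + 1/2)) * (s powr z / sqrt (pi * z)) \<le> reg_inc_beta s z (1/2)
       \<and> reg_inc_beta s z (1/2) \<le> 1 / sqrt (1 - s) * (s powr z / sqrt (pi * z))"
proof -
  have "s = 1 - (1 - 2 * q)\<^sup>2"
    unfolding assms(3,4) by (simp add: power2_eq_square algebra_simps)
  moreover have "(1 - 2 * q)\<^sup>2 > 0" "(1 - 2 * q)\<^sup>2 \<le> 1"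
    using assms by (simp_all add: abs_square_le_1)
  ultimately have "0 \<le> s" "s < 1"
    by linarith+
  then show ?thesis
    using reg_inc_beta_half_bounds[of z s] \<open>z > 1\<close> by simp
qed
end
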